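(* Let $n\in\mathbb{N}$, $y_1,\dots,y_n\in\{-1,+1\}$, $z_1,\dots,z_n$ elements of a real Hilbert space $\mathcal{Z}$, $c_0\in\mathbb{R}^n_{\ge0}$, and let $(w^\star,b^\star,\xi^\star,\alpha^\star,\beta^\star)$ be a primal-dual optimal point of the WSVM problem with weights $c_0$. Let $\mathcal{W}$ be the family of equivalent weights defined below. Then there exists a weight vector $c'\in\mathcal{W}$ such that the WSVM problem with weights $c'$ has a primal-dual optimal point $(w^\star,b^\star,\xi^\star,\alpha',\beta')$ with $c'=\alpha'=\alpha^\star$ and $\beta'=0$.
   Context: For weights $c\in\mathbb{R}^n_{\ge0}$, the WSVM problem is $\min_{w\in\mathcal{Z},b\in\mathbb{R},\xi\in\mathbb{R}^n}\frac12\|w\|^2+\sum_i c_i\xi_i$ subject to $y_i(\langle w,z_i\rangle+b)\ge1-\xi_i$, $\xi_i\ge0$. A primal-dual optimal point $(w,b,\xi,\alpha,\beta)$ is one satisfying the KKT conditions: $w=\sum_i\alpha_iy_iz_i$; $\sum_i\alpha_iy_i=0$; $\alpha_i+\beta_i=c_i$; $\alpha_i[\xi_i-1+y_i(\langle w,z_i\rangle+b)]=0$; $\beta_i\xi_i=0$; $\xi_i-1+y_i(\langle w,z_i\rangle+b)\ge0$; $\alpha_i,\beta_i,\xi_i\ge0$. With $h_i=[1-y_i(\langle w^\star,z_i\rangle+b^\star)]_+$: $\mathcal{U}=\{\mu\in\mathbb{R}^n_{\ge0}:\sum_i\mu_iy_iz_i=w^\star,\ \sum_i\mu_iy_i=0,\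 \sum_i\mu_i=\sum_i\alpha^\star_i,\ \mu_i(\xi^\star_i-h_i)=0\ \forall i\}$, $\mathcal{V}=\{\nu\in\mathbb{R}^n_{\ge0}:\nu_i\xi^\star_i=0\ \forall i\}$, $\mathcal{W}=\{\mu+\nu:\mu\in\mathcal{U},\nu\in\mathcal{V}\}$. *)

theory Defs
  imports "HOL-Analysis.Analysis"
begin

text \<open>Data: n points, labels y i, features z i (indices i < n). Vectors in R^n are
  functions nat => real of which only the entries i < n matter.\<close>

definition wsvm_kkt ::
  "nat \<Rightarrow> (nat \<Rightarrow> real) \<Rightarrow> (nat \<Rightarrow> 'z::real_inner) \<Rightarrow> (nat \<Rightarrow> real)
   \<Rightarrow> 'z \<Rightarrow> real \<Rightarrow> (nat \<Rightarrow> real) \<Rightarrow> (nat \<Rightarrow> real) \<Rightarrow> (nat \<Rightarrow> real) \<Rightarrow> bool" where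
  "wsvm_kkt n y z c w b \<xi> \<alpha> \<beta> \<longleftrightarrow>
     w = (\<Sum>i<n. (\<alpha> i * y i) *\<^sub>R z i) \<and>
     (\<Sum>i<n. \<alpha> i * y i) = 0 \<and>
     (\<forall>i<n. \<alpha> i + \<beta> i = c i \<and>
            \<alpha> i * (\<xi> i - 1 + y i * (inner w (z i) + b)) = 0 \<and>
            \<beta> i * \<xi> i = 0 \<and>
            \<xi> i - 1 + y i * (inner w (z i) + b) \<ge> 0 \<and>
            \<alpha> i \<ge> 0 \<and> \<beta> i \<ge> 0 \<and> \<xi> i \<ge> 0)"

definition hinge :: "nat \<Rightarrow> (nat \<Rightarrow> real) \<Rightarrow> (nat \<Rightarrow> 'z::real_inner) \<Rightarrow> 'z \<Rightarrow> real \<Rightarrow> nat \<Rightarrow> real" where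
  "hinge n y z w b i = max 0 (1 - y i * (inner w (z i) + b))"

definition U_set ::
  "nat \<Rightarrow> (nat \<Rightarrow> real) \<Rightarrow> (nat \<Rightarrow> 'z::real_inner) \<Rightarrow> 'z \<Rightarrow> real \<Rightarrow> (nat \<Rightarrow> real)
   \<Rightarrow> (nat \<Rightarrow> real) \<Rightarrow> (nat \<Rightarrow> real) set" where
  "U_set n y z w b \<xi> \<alpha> = {\<mu>. (\<forall>i<n. \<mu> i \<ge> 0) \<and>
      (\<Sum>i<n. (\<mu> i * y i) *\<^sub>R z i) = w \<and>
      (\<Sum>i<n. \<mu> i * y i) = 0 \<and>
      (\<Sum>i<n. \<mu> i) = (\<Sum>i<n. \<alpha> i) \<and>
      (\<forall>i<n. \<mu> i * (\<xi> i - hinge n y z w b i) = 0)}"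

definition V_set :: "nat \<Rightarrow> (nat \<Rightarrow> real) \<Rightarrow> (nat \<Rightarrow> real) set" where
  "V_set n \<xi> = {\<nu>. \<forall>i<n. \<nu> i \<ge> 0 \<and> \<nu> i * \<xi> i = 0}"

definition W_set ::
  "nat \<Rightarrow> (nat \<Rightarrow> real) \<Rightarrow> (nat \<Rightarrow> 'z::real_inner) \<Rightarrow> 'z \<Rightarrow> real \<Rightarrow> (nat \<Rightarrow> real)
   \<Rightarrow> (nat \<Rightarrow> real) \<Rightarrow> (nat \<Rightarrow> real) set" where
  "W_set n y z w b \<xi> \<alpha> = {c. \<exists>\<mu> \<in> U_set n y z w b \<xi> \<alpha>. \<exists>\<nu> \<in> V_set n \<xi>.
      \<forall>i<n. c i = \<mu> i + \<nu> i}"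

end

theory Submission
  imports Defs
begin

text \<open>The dual variable \<alpha> is itself an equivalent weight: taking \<mu> = \<alpha> and \<nu> = 0 in
  the decomposition, and \<beta>' = 0 in the KKT system, leaves every condition intact,
  because complementary slackness forces \<xi> i to equal the hinge loss wherever \<alpha> i > 0.\<close>

lemma wsvm_kkt_slack_eq_hinge:
  assumes "wsvm_kkt n y z c w b \<xi> \<alpha> \<beta>" and "i < n" and "\<alpha> i \<noteq> 0"
  shows "\<xi> i = hinge n y z w b i"
proof -
  have "\<xi> i = 1 - y i * (inner w (z i) + b)" and "\<xi> i \<ge> 0"
    using assms unfolding wsvm_kkt_def by auto
  then show ?thesis
    unfolding hinge_def by linarith
qed

lemma wsvm_kkt_dual_in_U_set:
  assumes "wsvm_kkt n y z c w b \<xi> \<alpha> \<beta>"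
  shows "\<alpha> \<in> U_set n y z w b \<xi> \<alpha>"
proof -
  have "\<forall>i<n. \<alpha> i * (\<xi> i - hinge n y z w b i) = 0"
    using wsvm_kkt_slack_eq_hinge[OF assms] by fastforce
  with assms show ?thesis
    unfolding U_set_def wsvm_kkt_def by auto
qed

lemma zero_in_V_set: "(\<lambda>_. 0) \<in> V_set n \<xi>"
  unfolding V_set_def by simp

lemma U_set_subset_W_set: "U_set n y z w b \<xi> \<alpha> \<subseteq> W_set n y z w b \<xi> \<alpha>"
proof
  fix \<mu> assume "\<mu> \<in> U_set n y z w b \<xi> \<alpha>"
  then show "\<mu> \<in> W_set n y z w b \<xi> \<alpha>"
    unfolding W_set_def using zero_in_V_set[of n \<xi>] by force
qed

lemma wsvm_kkt_reweight_by_dual: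
  assumes "wsvm_kkt n y z c w b \<xi> \<alpha> \<beta>"
  shows "wsvm_kkt n y z \<alpha> w b \<xi> \<alpha> (\<lambda>_. 0)"
  using assms unfolding wsvm_kkt_def by auto

theorem corollary1:
  fixes n :: nat and y :: "nat \<Rightarrow> real" and z :: "nat \<Rightarrow> 'z::{real_inner, complete_space}"
    and c0 :: "nat \<Rightarrow> real" and w :: 'z and b :: real and \<xi> \<alpha> \<beta> :: "nat \<Rightarrow> real"
  assumes "\<forall>i<n. y i = -1 \<or> y i = 1"
    and "\<forall>i<n. c0 i \<ge> 0"
    and "wsvm_kkt n y z c0 w b \<xi> \<alpha> \<beta>"
  shows "\<exists>c' \<in> W_set n y z w b \<xi> \<alpha>. \<exists>\<alpha>' \<beta>'.
           wsvm_kkt n y z c' w b \<xi> \<alpha>' \<beta>' \<and>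
           (\<forall>i<n. c' i = \<alpha>' i \<and> \<alpha>' i = \<alpha> i \<and> \<beta>' i = 0)"
proof -
  have "\<alpha> \<in> W_set n y z w b \<xi> \<alpha>"
    using wsvm_kkt_dual_in_U_set[OF assms(3)] U_set_subset_W_set by blast
  moreover have "wsvm_kkt n y z \<alpha> w b \<xi> \<alpha> (\<lambda>_. 0)"
    using wsvm_kkt_reweight_by_dual[OF assms(3)] .
  ultimately show ?thesis
    by fastforce
qed

end
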